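(* For every topological group $X$ endowed with its left coarse structure, $\mathcal D_<(X)\subset\mathcal S(X)$.
   Context: A coarse space is a pair $(X,\mathcal E)$ of a set and a family of entourages $\varepsilon\subset X\times X$ that contain the diagonal, are symmetric, are (up to containment) closed under composition $\delta\circ\varepsilon=\{(x,z):\exists y\,(x,y)\in\varepsilon,(y,z)\in\delta\}$, and such that any symmetric $\delta$ with $\Delta_X\subset\delta\subset\varepsilon\in\mathcal E$ is in $\mathcal E$. The left coarse structure of a topological group $G$ is the coarse structure with base $\{\{(x,y)\in G^2:x\in yK\}\}$, $K=K^{-1}$ ranging over compact symmetric subsets of $G$ containing the identity. Subsets carry the subspace coarse structure $\{\varepsilon\cap A^2\}$. $B(x,\varepsilon)=\{y:(x,y)\in\varepsilon\}$, $B(A,\varepsilon)=\bigcup_{a\in A}B(a,\varepsilon)$, $\operatorname{mesh}(\mathcal U)=\bigcup_{U\in\mathcal U}U\times U$. $\operatorname{asdim}(X)$ is the least $n\in\omega$ such that for every $\varepsilon\in\mathcal E$ there is a cover $\mathcal U$ of $X$ with $\operatorname{mesh}(\mathcal U)\subset\delta$ for some $\delta\in\mathcal E$ and each $B(x,\varepsilon)$ meeting at most $n+1$ members of $\mathcal U$ ($\infty$ if none). $A$ is large if $B(A,\varepsilon)=X$ for some $\varepsilon\in\mathcal E$; small if $L\setminus A$ is large for every large $L$. $\mathcal S(X)$ is the family of small subsets, $\mathcal D_<(X)=\{A\subset X:\operatorname{asdim}(A)<\operatorname{asdim}(X)\}$. *)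

theory Defs
  imports "HOL-Analysis.Analysis" "HOL-Algebra.Group"
begin

definition topological_group :: "('a, 'b) monoid_scheme \<Rightarrow> 'a topology \<Rightarrow> bool" where
  "topological_group G T \<longleftrightarrow> group G \<and> topspace T = carrier G \<and>
     continuous_map (prod_topology T T) T (\<lambda>(x, y). x \<otimes>\<^bsub>G\<^esub> y) \<and>
     continuous_map T T (\<lambda>x. inv\<^bsub>G\<^esub> x)"

definition ball_c :: "'a \<Rightarrow> ('a \<times> 'a) set \<Rightarrow> 'a set" where
  "ball_c x \<epsilon> = {y. (x, y) \<in> \<epsilon>}"

definition ball_set :: "'a set \<Rightarrow> ('a \<times> 'a) set \<Rightarrow> 'a set" where
  "ball_set A \<epsilon> = (\<Union>a\<in>A. ball_c a \<epsilon>)"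

definition mesh :: "'a set set \<Rightarrow> ('a \<times> 'a) set" where
  "mesh \<U> = (\<Union>U\<in>\<U>. U \<times> U)"

definition left_base :: "('a, 'b) monoid_scheme \<Rightarrow> 'a set \<Rightarrow> ('a \<times> 'a) set" where
  "left_base G K = {(x, y). x \<in> carrier G \<and> y \<in> carrier G \<and> (\<exists>k\<in>K. x = y \<otimes>\<^bsub>G\<^esub> k)}"

definition left_coarse :: "('a, 'b) monoid_scheme \<Rightarrow> 'a topology \<Rightarrow> ('a \<times> 'a) set set" where
  "left_coarse G T = {\<epsilon>. Id_on (carrier G) \<subseteq> \<epsilon> \<and> sym \<epsilon> \<and>
     (\<exists>K. K \<subseteq> carrier G \<and> compactin T K \<and> (\<lambda>x. inv\<^bsub>G\<^esub> x) ` K = K \<and>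
          \<one>\<^bsub>G\<^esub> \<in> K \<and> \<epsilon> \<subseteq> left_base G K)}"

definition subspace_coarse :: "('a \<times> 'a) set set \<Rightarrow> 'a set \<Rightarrow> ('a \<times> 'a) set set" where
  "subspace_coarse E A = {\<epsilon> \<inter> (A \<times> A) | \<epsilon>. \<epsilon> \<in> E}"

definition asdim_le :: "'a set \<Rightarrow> ('a \<times> 'a) set set \<Rightarrow> nat \<Rightarrow> bool" where
  "asdim_le X E n \<longleftrightarrow> (\<forall>\<epsilon>\<in>E. \<exists>\<U>. \<U> \<subseteq> Pow X \<and> \<Union>\<U> = X \<and>
      (\<exists>\<delta>\<in>E. mesh \<U> \<subseteq> \<delta>) \<and>
      (\<forall>x\<in>X. finite {U\<in>\<U>. ball_c x \<epsilon> \<inter> U \<noteq> {}} \<and>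
              card {U\<in>\<U>. ball_c x \<epsilon> \<inter> U \<noteq> {}} \<le> n + 1))"

definition asdim :: "'a set \<Rightarrow> ('a \<times> 'a) set set \<Rightarrow> enat" where
  "asdim X E = (if \<exists>n. asdim_le X E n then enat (LEAST n. asdim_le X E n) else \<infinity>)"

definition large :: "'a set \<Rightarrow> ('a \<times> 'a) set set \<Rightarrow> 'a set \<Rightarrow> bool" where
  "large X E A \<longleftrightarrow> (\<exists>\<epsilon>\<in>E. ball_set A \<epsilon> = X)"

definition small_sets :: "'a set \<Rightarrow> ('a \<times> 'a) set set \<Rightarrow> 'a set set" where
  "small_sets X E = {A. A \<subseteq> X \<and> (\<forall>L. L \<subseteq> X \<longrightarrow> large X E L \<longrightarrow> large X E (L - A))}"

definition lower_dim_sets :: "'a set \<Rightarrow> ('a \<times> 'a) set set \<Rightarrow> 'a set set" where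
  "lower_dim_sets X E = {A. A \<subseteq> X \<and> asdim A (subspace_coarse E A) < asdim X E}"

end

theory Submission
  imports Defs "HOL-Algebra.Coset"
begin

text \<open>
  Suppose \<open>A\<close> is not small: some large \<open>L\<close> has \<open>L - A\<close> not large. Then there is one compact
  \<open>K\<close> such that every finite \<open>F \<subseteq> G\<close> has a left translate \<open>x F\<close> inside \<open>A K\<close>. Pulling back a
  cover of \<open>A\<close> that witnesses \<open>asdim A \<le> n\<close> along these translates gives covers of the finite
  sets \<open>F\<close> whose mesh and multiplicity are bounded uniformly in \<open>F\<close>, and a limit along an
  ultrafilter on the finite subsets of \<open>G\<close> glues them into a cover of all of \<open>G\<close>. Hence
  \<open>asdim G \<le> asdim A\<close>, so a subset of strictly smaller asymptotic dimension is small.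
\<close>

section \<open>Ultrafilters\<close>

definition ultrafilter :: "'a filter \<Rightarrow> bool" where
  "ultrafilter U \<longleftrightarrow> U \<noteq> bot \<and> (\<forall>P. eventually P U \<or> eventually (\<lambda>x. \<not> P x) U)"

lemma ultrafilterI_minimal:
  assumes "U \<noteq> bot" and minimal: "\<And>V. V \<le> U \<Longrightarrow> V \<noteq> bot \<Longrightarrow> V = U"
  shows "ultrafilter U"
proof -
  have "eventually P U" if "\<not> eventually (\<lambda>x. \<not> P x) U" for P
  proof -
    define V where "V = inf U (principal {x. P x})"
    have "V \<noteq> bot"
      using that by (simp add: V_def trivial_limit_def eventually_inf_principal)
    then have "V = U" by (intro minimal) (simp add: V_def)
    moreover have "eventually P V" by (simp add: V_def eventually_inf_principal)
    ultimately show ?thesis by simp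
  qed
  with assms(1) show ?thesis by (auto simp: ultrafilter_def)
qed

lemma ultrafilter_exists:
  assumes "F \<noteq> bot"
  obtains U where "U \<le> F" "ultrafilter U"
proof -
  define ev where "ev U = {P. eventually P U}" for U :: "'a filter"
  have ev_subset_iff: "ev U \<subseteq> ev V \<longleftrightarrow> V \<le> U" for U V
    by (auto simp: ev_def le_filter_def)
  define \<A> where "\<A> = ev ` {U. U \<le> F \<and> U \<noteq> bot}"
  have "\<exists>M\<in>\<A>. \<forall>X\<in>\<A>. M \<subseteq> X \<longrightarrow> X = M"
  proof (rule Zorn_Lemma2, intro ballI)
    fix C assume C: "C \<in> chains \<A>"
    show "\<exists>M\<in>\<A>. \<forall>X\<in>C. X \<subseteq> M"
    proof (cases "C = {}")
      case True
      then show ?thesis using assms by (auto simp: \<A>_def)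
    next
      case False
      define B where "B = {U. U \<le> F \<and> U \<noteq> bot \<and> ev U \<in> C}"
      have C_eq: "C = ev ` B"
        using chainsD2[OF C] by (auto simp: \<A>_def B_def)
      have "B \<noteq> {}" using False C_eq by auto
      moreover have "\<exists>W\<in>B. W \<le> inf U V" if "U \<in> B" "V \<in> B" for U V
        using chainsD[OF C, of "ev U" "ev V"] that
        by (auto simp: B_def ev_subset_iff inf_absorb1 inf_absorb2)
      ultimately have ev_Inf: "eventually P (Inf B) \<longleftrightarrow> (\<exists>U\<in>B. eventually P U)" for P
        by (rule eventually_Inf_base)
      have "Inf B \<noteq> bot"
        using ev_Inf[of "\<lambda>_. False"] by (auto simp: B_def trivial_limit_def)
      moreover have "Inf B \<le> F"
        using \<open>B \<noteq> {}\<close> by (auto simp: B_def intro: Inf_lower2)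
      moreover have "\<forall>X\<in>C. X \<subseteq> ev (Inf B)"
        using ev_Inf by (auto simp: C_eq ev_def)
      ultimately show ?thesis by (auto simp: \<A>_def)
    qed
  qed
  then obtain U where U: "U \<le> F" "U \<noteq> bot"
    and max: "\<And>V. V \<le> F \<Longrightarrow> V \<noteq> bot \<Longrightarrow> V \<le> U \<Longrightarrow> ev V = ev U"
    by (auto simp: \<A>_def ev_subset_iff)
  have "ultrafilter U"
  proof (rule ultrafilterI_minimal[OF U(2)])
    fix V assume "V \<le> U" "V \<noteq> bot"
    then have "ev V = ev U" using U(1) by (intro max) auto
    then show "V = U" by (auto simp: ev_def filter_eq_iff)
  qed
  with U(1) show ?thesis by (rule that)
qed

section \<open>Covers as limits of covers of finite sets\<close>

definition meets_at_most :: "'a set set \<Rightarrow> 'a set \<Rightarrow> nat \<Rightarrow> bool" where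
  "meets_at_most \<U> B k \<longleftrightarrow> finite {U\<in>\<U>. B \<inter> U \<noteq> {}} \<and> card {U\<in>\<U>. B \<inter> U \<noteq> {}} \<le> k"

lemma asdim_le_iff:
  "asdim_le X E n \<longleftrightarrow> (\<forall>\<epsilon>\<in>E. \<exists>\<U>. \<U> \<subseteq> Pow X \<and> \<Union>\<U> = X \<and> (\<exists>\<delta>\<in>E. mesh \<U> \<subseteq> \<delta>) \<and>
      (\<forall>x\<in>X. meets_at_most \<U> (ball_c x \<epsilon>) (n + 1)))"
  by (simp add: asdim_le_def meets_at_most_def)

lemma meets_at_mostI:
  assumes "\<And>\<S>. \<S> \<subseteq> {U\<in>\<U>. B \<inter> U \<noteq> {}} \<Longrightarrow> finite \<S> \<Longrightarrow> card \<S> \<le> k"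
  shows "meets_at_most \<U> B k"
  using finite_if_finite_subsets_card_bdd[OF assms] by (simp add: meets_at_most_def)

lemma meets_at_most_image:
  assumes "meets_at_most \<W> B' k" and "\<And>W. W \<in> \<W> \<Longrightarrow> B \<inter> f W \<noteq> {} \<Longrightarrow> B' \<inter> W \<noteq> {}"
  shows "meets_at_most (f ` \<W>) B k"
proof -
  let ?\<W>' = "{W\<in>\<W>. B' \<inter> W \<noteq> {}}"
  have sub: "{V\<in>f ` \<W>. B \<inter> V \<noteq> {}} \<subseteq> f ` ?\<W>'"
    using assms(2) by auto
  have fin: "finite ?\<W>'" and bound: "card ?\<W>' \<le> k"
    using assms(1) by (auto simp: meets_at_most_def)
  have "card {V\<in>f ` \<W>. B \<inter> V \<noteq> {}} \<le> card (f ` ?\<W>')"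
    using fin sub by (intro card_mono) auto
  also have "\<dots> \<le> card ?\<W>'" by (rule card_image_le[OF fin])
  finally show ?thesis
    using bound finite_subset[OF sub] fin by (simp add: meets_at_most_def)
qed

definition ultralimit :: "'i filter \<Rightarrow> 'a set \<Rightarrow> ('i \<Rightarrow> 'a set) \<Rightarrow> 'a set" where
  "ultralimit \<FF> X c = {x\<in>X. eventually (\<lambda>i. x \<in> c i) \<FF>}"

definition ultralimit_family :: "'i filter \<Rightarrow> 'a set \<Rightarrow> ('i \<Rightarrow> 'a set set) \<Rightarrow> 'a set set" where
  "ultralimit_family \<FF> X \<U> = {ultralimit \<FF> X c | c. eventually (\<lambda>i. c i \<in> \<U> i) \<FF>}"

lemma ultralimit_family_subset: "ultralimit_family \<FF> X \<U> \<subseteq> Pow X"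
  by (auto simp: ultralimit_family_def ultralimit_def)

lemma ultralimit_family_covers:
  assumes "x \<in> X" and "eventually (\<lambda>i. \<exists>U\<in>\<U> i. x \<in> U) \<FF>"
  shows "x \<in> \<Union>(ultralimit_family \<FF> X \<U>)"
proof -
  define c where "c i = (SOME U. U \<in> \<U> i \<and> x \<in> U)" for i
  have "c i \<in> \<U> i \<and> x \<in> c i" if "\<exists>U\<in>\<U> i. x \<in> U" for i
    using that unfolding c_def Bex_def by (rule someI_ex)
  then have "eventually (\<lambda>i. c i \<in> \<U> i \<and> x \<in> c i) \<FF>"
    using assms(2) by (rule eventually_mono[rotated])
  then have "ultralimit \<FF> X c \<in> ultralimit_family \<FF> X \<U>" "x \<in> ultralimit \<FF> X c"
    using assms(1) by (auto simp: ultralimit_family_def ultralimit_def elim: eventually_mono)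
  then show ?thesis by blast
qed

lemma ultralimit_family_mesh:
  assumes "\<FF> \<noteq> bot" and "eventually (\<lambda>i. mesh (\<U> i) \<subseteq> \<delta>) \<FF>"
  shows "mesh (ultralimit_family \<FF> X \<U>) \<subseteq> \<delta>"
proof
  fix q assume "q \<in> mesh (ultralimit_family \<FF> X \<U>)"
  then obtain c y z where q: "q = (y, z)" and c: "eventually (\<lambda>i. c i \<in> \<U> i) \<FF>"
    and yz: "y \<in> ultralimit \<FF> X c" "z \<in> ultralimit \<FF> X c"
    by (auto simp: mesh_def ultralimit_family_def)
  have "eventually (\<lambda>i. y \<in> c i) \<FF>" "eventually (\<lambda>i. z \<in> c i) \<FF>"
    using yz by (auto simp: ultralimit_def)
  with assms(2) c have "eventually (\<lambda>i. (y, z) \<in> \<delta>) \<FF>"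
    by eventually_elim (auto simp: mesh_def)
  then show "q \<in> \<delta>" using assms(1) q by (simp add: eventually_const_iff)
qed

lemma ultralimit_eventually_neq:
  assumes "ultrafilter \<FF>" and "ultralimit \<FF> X c \<noteq> ultralimit \<FF> X c'"
  shows "eventually (\<lambda>i. c i \<noteq> c' i) \<FF>"
proof -
  obtain x where x: "x \<in> X" "(x \<in> ultralimit \<FF> X c) \<noteq> (x \<in> ultralimit \<FF> X c')"
    using assms(2) by (auto simp: ultralimit_def)
  have ev: "eventually (\<lambda>i. (x \<in> d i) = (x \<in> ultralimit \<FF> X d)) \<FF>" for d
    using assms(1) x(1) by (cases "x \<in> ultralimit \<FF> X d") (auto simp: ultralimit_def ultrafilter_def)
  from ev[of c] ev[of c'] show ?thesis
    by eventually_elim (use x(2) in auto)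
qed

lemma ultralimit_family_meets_at_most:
  assumes "ultrafilter \<FF>" and "eventually (\<lambda>i. meets_at_most (\<U> i) B k) \<FF>"
  shows "meets_at_most (ultralimit_family \<FF> X \<U>) B k"
proof (rule meets_at_mostI)
  fix \<S> assume \<S>: "\<S> \<subseteq> {V\<in>ultralimit_family \<FF> X \<U>. B \<inter> V \<noteq> {}}" "finite \<S>"
  have "\<forall>V\<in>\<S>. \<exists>d. ultralimit \<FF> X d = V \<and> eventually (\<lambda>i. d i \<in> \<U> i) \<FF>"
    using \<S>(1) by (auto simp: ultralimit_family_def)
  then obtain c where c: "\<forall>V\<in>\<S>. ultralimit \<FF> X (c V) = V \<and> eventually (\<lambda>i. c V i \<in> \<U> i) \<FF>"
    by (rule bchoice[elim_format]) blast
  have "\<forall>V\<in>\<S>. \<exists>z. z \<in> B \<and> z \<in> V" using \<S>(1) by blast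
  then obtain y where y: "\<forall>V\<in>\<S>. y V \<in> B \<and> y V \<in> V"
    by (rule bchoice[elim_format]) blast
  have "eventually (\<lambda>i. c V i \<in> \<U> i \<and> y V \<in> c V i) \<FF>" if V: "V \<in> \<S>" for V
  proof -
    have "y V \<in> ultralimit \<FF> X (c V)" using c y V by simp
    then show ?thesis using c V by (auto simp: ultralimit_def intro: eventually_conj)
  qed
  then have members: "eventually (\<lambda>i. \<forall>V\<in>\<S>. c V i \<in> \<U> i \<and> y V \<in> c V i) \<FF>"
    using \<S>(2) by (simp add: eventually_ball_finite)
  have "eventually (\<lambda>i. c V i \<noteq> c V' i) \<FF>" if V: "V \<in> \<S>" "V' \<in> \<S>" "V \<noteq> V'" for V V'
  proof -
    have "ultralimit \<FF> X (c V) \<noteq> ultralimit \<FF> X (c V')" using c V by simp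
    then show ?thesis by (rule ultralimit_eventually_neq[OF assms(1)])
  qed
  then have distinct: "eventually (\<lambda>i. \<forall>V\<in>\<S>. \<forall>V'\<in>\<S>. V \<noteq> V' \<longrightarrow> c V i \<noteq> c V' i) \<FF>"
    using \<S>(2) by (simp add: eventually_ball_finite)
  from members distinct assms(2) have "eventually (\<lambda>i. card \<S> \<le> k) \<FF>"
  proof eventually_elim
    case (elim i)
    have inj: "inj_on (\<lambda>V. c V i) \<S>" using elim(2) by (auto simp: inj_on_def)
    have sub: "(\<lambda>V. c V i) ` \<S> \<subseteq> {U\<in>\<U> i. B \<inter> U \<noteq> {}}" using elim(1) y by blast
    have fin: "finite {U\<in>\<U> i. B \<inter> U \<noteq> {}}" and bound: "card {U\<in>\<U> i. B \<inter> U \<noteq> {}} \<le> k"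
      using elim(3) by (auto simp: meets_at_most_def)
    have "card \<S> \<le> card {U\<in>\<U> i. B \<inter> U \<noteq> {}}" using inj sub fin by (rule card_inj_on_le)
    then show ?case using bound by linarith
  qed
  then show "card \<S> \<le> k" using assms(1) by (simp add: ultrafilter_def eventually_const_iff)
qed

lemma ultrafilter_finite_subsets:
  obtains \<FF> where "ultrafilter \<FF>" "eventually (\<lambda>F. finite F \<and> F \<subseteq> X) \<FF>"
    "\<forall>x\<in>X. eventually (\<lambda>F. finite F \<and> F \<subseteq> X \<and> x \<in> F) \<FF>"
proof -
  obtain \<FF> where le: "\<FF> \<le> finite_subsets_at_top X" and \<FF>: "ultrafilter \<FF>"
    using ultrafilter_exists[OF finite_subsets_at_top_neq_bot] .
  have finite: "eventually (\<lambda>F. finite F \<and> F \<subseteq> X) \<FF>"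
    by (rule filter_leD[OF le]) (rule eventually_finite_subsets_at_top_weakI, simp)
  have contains: "\<forall>x\<in>X. eventually (\<lambda>F. finite F \<and> F \<subseteq> X \<and> x \<in> F) \<FF>"
  proof
    fix x assume "x \<in> X"
    show "eventually (\<lambda>F. finite F \<and> F \<subseteq> X \<and> x \<in> F) \<FF>"
    proof (rule filter_leD[OF le])
      show "eventually (\<lambda>F. finite F \<and> F \<subseteq> X \<and> x \<in> F) (finite_subsets_at_top X)"
        unfolding eventually_finite_subsets_at_top using \<open>x \<in> X\<close> by (intro exI[of _ "{x}"]) auto
    qed
  qed
  from \<FF> finite contains show ?thesis by (rule that)
qed

lemma asdim_le_if_finite_subsets:
  assumes "\<And>\<epsilon>. \<epsilon> \<in> E \<Longrightarrow> \<exists>\<delta>\<in>E. \<forall>F. finite F \<and> F \<subseteq> X \<longrightarrow>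
      (\<exists>\<U>. F \<subseteq> \<Union>\<U> \<and> mesh \<U> \<subseteq> \<delta> \<and> (\<forall>x\<in>F. meets_at_most \<U> (ball_c x \<epsilon>) (n + 1)))"
  shows "asdim_le X E n"
  unfolding asdim_le_iff
proof
  fix \<epsilon> assume "\<epsilon> \<in> E"
  from assms[OF this] obtain \<delta> where "\<delta> \<in> E" and "\<forall>F. finite F \<and> F \<subseteq> X \<longrightarrow>
      (\<exists>\<U>. F \<subseteq> \<Union>\<U> \<and> mesh \<U> \<subseteq> \<delta> \<and> (\<forall>x\<in>F. meets_at_most \<U> (ball_c x \<epsilon>) (n + 1)))" ..
  then obtain \<U> where
      cover: "\<And>F. finite F \<and> F \<subseteq> X \<Longrightarrow> F \<subseteq> \<Union>(\<U> F)" and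
      mesh: "\<And>F. finite F \<and> F \<subseteq> X \<Longrightarrow> mesh (\<U> F) \<subseteq> \<delta>" and
      mult: "\<And>F x. finite F \<and> F \<subseteq> X \<Longrightarrow> x \<in> F \<Longrightarrow> meets_at_most (\<U> F) (ball_c x \<epsilon>) (n + 1)"
    by metis
  obtain \<FF> where \<FF>: "ultrafilter \<FF>" and eventually_finite: "eventually (\<lambda>F. finite F \<and> F \<subseteq> X) \<FF>"
    and eventually_contains: "\<forall>x\<in>X. eventually (\<lambda>F. finite F \<and> F \<subseteq> X \<and> x \<in> F) \<FF>"
    by (rule ultrafilter_finite_subsets)
  define \<V> where "\<V> = ultralimit_family \<FF> X \<U>"
  have "\<V> \<subseteq> Pow X" by (simp add: \<V>_def ultralimit_family_subset)
  moreover have "X \<subseteq> \<Union>\<V>"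
  proof
    fix x assume "x \<in> X"
    have "eventually (\<lambda>F. \<exists>U\<in>\<U> F. x \<in> U) \<FF>"
      using bspec[OF eventually_contains \<open>x \<in> X\<close>]
    proof (rule eventually_mono)
      fix F assume "finite F \<and> F \<subseteq> X \<and> x \<in> F"
      then show "\<exists>U\<in>\<U> F. x \<in> U" using subsetD[OF cover[of F], of x] by simp
    qed
    then show "x \<in> \<Union>\<V>" unfolding \<V>_def by (rule ultralimit_family_covers[OF \<open>x \<in> X\<close>])
  qed
  moreover have "mesh \<V> \<subseteq> \<delta>"
  proof -
    have "eventually (\<lambda>F. mesh (\<U> F) \<subseteq> \<delta>) \<FF>"
      using eventually_finite by (rule eventually_mono) (rule mesh)
    then show ?thesis
      unfolding \<V>_def using \<FF> by (intro ultralimit_family_mesh) (auto simp: ultrafilter_def)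
  qed
  moreover have "meets_at_most \<V> (ball_c x \<epsilon>) (n + 1)" if "x \<in> X" for x
  proof -
    have "eventually (\<lambda>F. meets_at_most (\<U> F) (ball_c x \<epsilon>) (n + 1)) \<FF>"
      using bspec[OF eventually_contains that] by (rule eventually_mono) (rule mult; simp)
    then show ?thesis unfolding \<V>_def by (rule ultralimit_family_meets_at_most[OF \<FF>])
  qed
  ultimately show "\<exists>\<V>. \<V> \<subseteq> Pow X \<and> \<Union>\<V> = X \<and> (\<exists>\<delta>\<in>E. mesh \<V> \<subseteq> \<delta>) \<and>
      (\<forall>x\<in>X. meets_at_most \<V> (ball_c x \<epsilon>) (n + 1))"
    using \<open>\<delta> \<in> E\<close> by (intro exI[of _ \<V>]) auto
qed

section \<open>Left translates of covers in a topological group\<close>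

lemma left_base_mono: "K \<subseteq> K' \<Longrightarrow> left_base G K \<subseteq> left_base G K'"
  by (auto simp: left_base_def)

lemma (in group) inv_image_eq:
  assumes "K \<subseteq> carrier G" and "\<And>x. x \<in> K \<Longrightarrow> inv x \<in> K"
  shows "(\<lambda>x. inv x) ` K = K"
proof
  show "K \<subseteq> (\<lambda>x. inv x) ` K"
  proof
    fix x assume "x \<in> K"
    then have "x = inv (inv x)" "inv x \<in> K" using assms by auto
    then show "x \<in> (\<lambda>x. inv x) ` K" by (rule image_eqI)
  qed
qed (use assms in blast)

definition thick_in :: "('a, 'b) monoid_scheme \<Rightarrow> 'a set \<Rightarrow> 'a set \<Rightarrow> bool" where
  "thick_in G A K \<longleftrightarrow> (\<forall>F. finite F \<and> F \<subseteq> carrier G \<longrightarrow> (\<exists>x\<in>carrier G. x <#\<^bsub>G\<^esub> F \<subseteq> A <#>\<^bsub>G\<^esub> K))"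

definition translate_cover :: "('a, 'b) monoid_scheme \<Rightarrow> 'a \<Rightarrow> 'a set \<Rightarrow> 'a set set \<Rightarrow> 'a set set" where
  "translate_cover G x K \<W> = (\<lambda>W. inv\<^bsub>G\<^esub> x <#\<^bsub>G\<^esub> (W <#>\<^bsub>G\<^esub> K)) ` \<W>"

context group
begin

lemma mult_inv_cancel_right: "x \<in> carrier G \<Longrightarrow> y \<in> carrier G \<Longrightarrow> x \<otimes> y \<otimes> inv y = x"
  by (simp add: m_assoc)

lemma mem_translate_iff: "y \<in> x <# (W <#> K) \<longleftrightarrow> (\<exists>w\<in>W. \<exists>k\<in>K. y = x \<otimes> (w \<otimes> k))"
  by (auto simp: l_coset_def set_mult_def)

lemma translate_cover_covers:
  assumes x: "x \<in> carrier G" and F: "F \<subseteq> carrier G" "x <# F \<subseteq> A <#> K" and \<W>: "\<Union>\<W> = A"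
  shows "F \<subseteq> \<Union>(translate_cover G x K \<W>)"
proof
  fix f assume "f \<in> F"
  then have "x \<otimes> f \<in> A <#> K" using F(2) by (auto simp: l_coset_def)
  then obtain a k where "a \<in> A" "k \<in> K" and xf: "x \<otimes> f = a \<otimes> k" by (auto simp: set_mult_def)
  then obtain W where "W \<in> \<W>" "a \<in> W" using \<W> by blast
  have "f = inv x \<otimes> (x \<otimes> f)" using x F(1) \<open>f \<in> F\<close> by (auto simp: m_assoc[symmetric])
  then have "f \<in> inv x <# (W <#> K)"
    unfolding mem_translate_iff xf using \<open>a \<in> W\<close> \<open>k \<in> K\<close> by blast
  then show "f \<in> \<Union>(translate_cover G x K \<W>)"
    using \<open>W \<in> \<W>\<close> by (auto simp: translate_cover_def)
qed

lemma translate_cover_mesh: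
  assumes x: "x \<in> carrier G" and K: "K \<subseteq> carrier G" "(\<lambda>x. inv x) ` K = K"
    and D: "D \<subseteq> carrier G" and mesh: "mesh \<W> \<subseteq> left_base G D"
  shows "mesh (translate_cover G x K \<W>) \<subseteq> left_base G (K <#> D <#> K)"
proof
  fix q assume "q \<in> mesh (translate_cover G x K \<W>)"
  then obtain W y z where W: "W \<in> \<W>" and q: "q = (y, z)"
    and yz: "y \<in> inv x <# (W <#> K)" "z \<in> inv x <# (W <#> K)"
    by (auto simp: mesh_def translate_cover_def)
  obtain u k where u: "u \<in> W" "k \<in> K" "y = inv x \<otimes> (u \<otimes> k)"
    using yz(1) unfolding mem_translate_iff by blast
  obtain u' k' where u': "u' \<in> W" "k' \<in> K" "z = inv x \<otimes> (u' \<otimes> k')"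
    using yz(2) unfolding mem_translate_iff by blast
  have "(u, u') \<in> left_base G D" using u u' W mesh by (auto simp: mesh_def)
  then obtain d where d: "d \<in> D" "u = u' \<otimes> d" "u \<in> carrier G" "u' \<in> carrier G"
    unfolding left_base_def by blast
  have c: "d \<in> carrier G" "k \<in> carrier G" "k' \<in> carrier G" using d(1) D u(2) u'(2) K(1) by auto
  have "y = z \<otimes> (inv k' \<otimes> d \<otimes> k)"
    using u(3) u'(3) d c x by (simp add: m_assoc[symmetric] mult_inv_cancel_right)
  moreover have "inv k' \<otimes> d \<otimes> k \<in> K <#> D <#> K"
    using u'(2) K(2) d(1) u(2) by (force simp: set_mult_def)
  moreover have "y \<in> carrier G" "z \<in> carrier G" using u(3) u'(3) d c x by auto
  ultimately show "q \<in> left_base G (K <#> D <#> K)"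
    using q unfolding left_base_def by blast
qed

text \<open>If \<open>x p = a k\<^sub>0\<close>, every member of the translated cover near \<open>p\<close> comes from a member of
  \<open>\<W>\<close> near \<open>a\<close>.\<close>
lemma translate_cover_meets_at_most:
  assumes x: "x \<in> carrier G" and p: "p \<in> carrier G" "x \<otimes> p \<in> A <#> K"
    and K: "K \<subseteq> carrier G" "(\<lambda>x. inv x) ` K = K" and K1: "K1 \<subseteq> carrier G" "\<epsilon> \<subseteq> left_base G K1"
    and \<W>: "\<W> \<subseteq> Pow A" "A \<subseteq> carrier G"
    and \<delta>: "left_base G (K <#> K1 <#> K) \<inter> A \<times> A \<subseteq> \<delta>"
    and mult: "\<And>a. a \<in> A \<Longrightarrow> meets_at_most \<W> (ball_c a \<delta>) n"
  shows "meets_at_most (translate_cover G x K \<W>) (ball_c p \<epsilon>) n"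
proof -
  obtain a k0 where a: "a \<in> A" "k0 \<in> K" "x \<otimes> p = a \<otimes> k0"
    using p(2) by (auto simp: set_mult_def)
  show ?thesis unfolding translate_cover_def
  proof (rule meets_at_most_image[OF mult[OF a(1)]])
    fix W assume W: "W \<in> \<W>" and "ball_c p \<epsilon> \<inter> (inv x <# (W <#> K)) \<noteq> {}"
    then obtain y where y: "(p, y) \<in> \<epsilon>" "y \<in> inv x <# (W <#> K)" by (auto simp: ball_c_def)
    obtain w k where w: "w \<in> W" "k \<in> K" "y = inv x \<otimes> (w \<otimes> k)"
      using y(2) unfolding mem_translate_iff by blast
    obtain k1 where k1: "k1 \<in> K1" "p = y \<otimes> k1"
      using y(1) K1(2) unfolding left_base_def by blast
    have wA: "w \<in> A" using w(1) W \<W>(1) by auto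
    have c: "w \<in> carrier G" "k \<in> carrier G" "k1 \<in> carrier G" "k0 \<in> carrier G" "a \<in> carrier G"
      using wA \<W>(2) w(2) k1(1) a K K1(1) by auto
    have "a = x \<otimes> p \<otimes> inv k0" using a(3) c by (simp add: m_assoc)
    also have "\<dots> = w \<otimes> (k \<otimes> k1 \<otimes> inv k0)"
      using w(3) k1(2) c x by (simp add: m_assoc[symmetric] mult_inv_cancel_right)
    finally have "a = w \<otimes> (k \<otimes> k1 \<otimes> inv k0)" .
    moreover have "k \<otimes> k1 \<otimes> inv k0 \<in> K <#> K1 <#> K"
      using w(2) k1(1) a(2) K(2) by (force simp: set_mult_def)
    ultimately have "(a, w) \<in> \<delta>"
      using \<delta> a(1) wA c unfolding left_base_def by blast
    then show "ball_c a \<delta> \<inter> W \<noteq> {}" using w(1) by (auto simp: ball_c_def)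
  qed
qed

end

locale top_group = group G for G (structure) +
  fixes T :: "'a topology"
  assumes topological_group: "topological_group G T"
begin

lemma topspace_eq: "topspace T = carrier G"
  using topological_group by (simp add: topological_group_def)

lemma compactin_subset_carrier: "compactin T K \<Longrightarrow> K \<subseteq> carrier G"
  using compactin_subset_topspace topspace_eq by blast

lemma compactin_set_mult:
  assumes "compactin T M" "compactin T N"
  shows "compactin T (M <#> N)"
proof -
  have "M <#> N = (\<lambda>(x, y). x \<otimes> y) ` (M \<times> N)"
    by (auto simp: set_mult_def)
  moreover have "compactin (prod_topology T T) (M \<times> N)"
    using assms by (simp add: compactin_Times)
  moreover have "continuous_map (prod_topology T T) T (\<lambda>(x, y). x \<otimes> y)"
    using topological_group by (simp add: topological_group_def)
  ultimately show ?thesis by (simp add: image_compactin)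
qed

lemma compactin_inv_image: "compactin T K \<Longrightarrow> compactin T ((\<lambda>x. inv x) ` K)"
  using topological_group by (simp add: topological_group_def image_compactin)

lemma left_coarse_subset: "\<epsilon> \<in> left_coarse G T \<Longrightarrow> \<epsilon> \<subseteq> carrier G \<times> carrier G"
  by (auto simp: left_coarse_def left_base_def)

lemma left_coarseE:
  assumes "\<epsilon> \<in> left_coarse G T"
  obtains K where "compactin T K" "(\<lambda>x. inv x) ` K = K" "\<epsilon> \<subseteq> left_base G K"
  using assms by (auto simp: left_coarse_def)

lemma left_base_in_left_coarse:
  assumes K: "compactin T K" "(\<lambda>x. inv x) ` K = K" "\<one> \<in> K"
  shows "left_base G K \<in> left_coarse G T"
proof -
  have "(y, x) \<in> left_base G K" if xy: "(x, y) \<in> left_base G K" for x y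
  proof -
    obtain k where k: "x \<in> carrier G" "y \<in> carrier G" "k \<in> K" "x = y \<otimes> k"
      using xy unfolding left_base_def by blast
    have "k \<in> carrier G" using k(3) compactin_subset_carrier[OF K(1)] by blast
    then have "y = x \<otimes> inv k" using k by (simp add: m_assoc)
    moreover have "inv k \<in> K" using k(3) K(2) by blast
    ultimately show ?thesis using k by (auto simp: left_base_def)
  qed
  then have "sym (left_base G K)" by (rule symI)
  moreover have "Id_on (carrier G) \<subseteq> left_base G K"
    using K(3) by (auto simp: Id_on_def left_base_def intro: bexI[where x=\<one>])
  ultimately show ?thesis
    unfolding left_coarse_def using K compactin_subset_carrier[OF K(1)]
    by (intro CollectI conjI exI[of _ K]) auto
qed

lemma compact_left_base_bounded:
  assumes "compactin T K"
  obtains \<delta> where "\<delta> \<in> left_coarse G T" "left_base G K \<subseteq> \<delta>"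
proof -
  define K' where "K' = K \<union> (\<lambda>x. inv x) ` K \<union> {\<one>}"
  have "compactin T K'"
    unfolding K'_def
    by (rule compactin_Un[OF compactin_Un[OF assms compactin_inv_image[OF assms]] finite_imp_compactin])
      (use topspace_eq in auto)
  moreover have "(\<lambda>x. inv x) ` K' = K'"
  proof (rule inv_image_eq)
    show "K' \<subseteq> carrier G" using compactin_subset_carrier[OF assms] by (auto simp: K'_def)
    show "inv x \<in> K'" if "x \<in> K'" for x
      using that compactin_subset_carrier[OF assms] by (auto simp: K'_def)
  qed
  ultimately have "left_base G K' \<in> left_coarse G T"
    by (intro left_base_in_left_coarse) (auto simp: K'_def)
  moreover have "left_base G K \<subseteq> left_base G K'"
    by (rule left_base_mono) (auto simp: K'_def)
  ultimately show ?thesis by (rule that)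
qed

lemma thick_in_if_not_large_diff:
  assumes L: "large (carrier G) (left_coarse G T) L"
    and not_large: "\<not> large (carrier G) (left_coarse G T) (L - A)"
  obtains K where "compactin T K" "(\<lambda>x. inv x) ` K = K" "thick_in G A K"
proof -
  obtain \<epsilon> where \<epsilon>: "\<epsilon> \<in> left_coarse G T" and L_net: "ball_set L \<epsilon> = carrier G"
    using L by (auto simp: large_def)
  obtain K where K: "compactin T K" "(\<lambda>x. inv x) ` K = K" "\<epsilon> \<subseteq> left_base G K"
    using \<epsilon> by (rule left_coarseE)
  have K_carrier: "K \<subseteq> carrier G" by (rule compactin_subset_carrier[OF K(1)])
  have "\<exists>x\<in>carrier G. x <# F \<subseteq> A <#> K" if F: "finite F" "F \<subseteq> carrier G" for F
  proof -
    have "compactin T (F <#> K)"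
      using compactin_set_mult[OF finite_imp_compactin K(1)] F topspace_eq by simp
    then obtain \<delta> where \<delta>: "\<delta> \<in> left_coarse G T" "left_base G (F <#> K) \<subseteq> \<delta>"
      by (rule compact_left_base_bounded)
    have "ball_set (L - A) \<delta> \<noteq> carrier G" using not_large \<delta>(1) by (auto simp: large_def)
    moreover have "ball_set (L - A) \<delta> \<subseteq> carrier G"
      using left_coarse_subset[OF \<delta>(1)] by (auto simp: ball_set_def ball_c_def)
    ultimately obtain x where x: "x \<in> carrier G" "x \<notin> ball_set (L - A) \<delta>" by blast
    have "x \<otimes> f \<in> A <#> K" if f: "f \<in> F" for f
    proof -
      have fc: "f \<in> carrier G" using f F(2) by blast
      then have xf: "x \<otimes> f \<in> carrier G" using x(1) by simp
      then have "x \<otimes> f \<in> ball_set L \<epsilon>" using L_net by simp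
      then obtain l where "l \<in> L" "(l, x \<otimes> f) \<in> \<epsilon>" by (auto simp: ball_set_def ball_c_def)
      then obtain k where k: "k \<in> K" "l = x \<otimes> f \<otimes> k" "l \<in> carrier G"
        using K(3) unfolding left_base_def by blast
      have kc: "k \<in> carrier G" using k(1) K_carrier by auto
      have "l = x \<otimes> (f \<otimes> k)" using k(2) kc x(1) fc by (simp add: m_assoc)
      moreover have "f \<otimes> k \<in> F <#> K" using f k(1) by (auto simp: set_mult_def)
      ultimately have "(l, x) \<in> \<delta>" using \<delta>(2) x(1) k(3) unfolding left_base_def by blast
      then have "l \<in> A" using x(2) \<open>l \<in> L\<close> by (auto simp: ball_set_def ball_c_def)
      moreover have "x \<otimes> f = l \<otimes> inv k" using k(2) kc xf by (simp add: mult_inv_cancel_right)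
      moreover have "inv k \<in> K" using k(1) K(2) by blast
      ultimately show ?thesis by (auto simp: set_mult_def)
    qed
    then show ?thesis using x(1) by (auto simp: l_coset_def)
  qed
  then have "thick_in G A K" unfolding thick_in_def by blast
  with K show ?thesis by (intro that)
qed

lemma asdim_le_if_thick_in:
  assumes A: "A \<subseteq> carrier G" and K: "compactin T K" "(\<lambda>x. inv x) ` K = K" "thick_in G A K"
    and asdim_A: "asdim_le A (subspace_coarse (left_coarse G T) A) n"
  shows "asdim_le (carrier G) (left_coarse G T) n"
proof (rule asdim_le_if_finite_subsets)
  fix \<epsilon> assume "\<epsilon> \<in> left_coarse G T"
  then obtain K1 where K1: "compactin T K1" "\<epsilon> \<subseteq> left_base G K1"
    by (rule left_coarseE)
  obtain \<delta>1 where "\<delta>1 \<in> left_coarse G T" and \<delta>1: "left_base G (K <#> K1 <#> K) \<subseteq> \<delta>1"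
    using compactin_set_mult[OF compactin_set_mult[OF K(1) K1(1)] K(1)]
    by (rule compact_left_base_bounded)
  then have "\<delta>1 \<inter> A \<times> A \<in> subspace_coarse (left_coarse G T) A"
    by (auto simp: subspace_coarse_def)
  from asdim_A[unfolded asdim_le_iff, rule_format, OF this]
  obtain \<W> where \<W>: "\<W> \<subseteq> Pow A" "\<Union>\<W> = A"
    and mesh_\<W>: "\<exists>\<delta>\<in>subspace_coarse (left_coarse G T) A. mesh \<W> \<subseteq> \<delta>"
    and mult: "\<forall>a\<in>A. meets_at_most \<W> (ball_c a (\<delta>1 \<inter> A \<times> A)) (n + 1)"
    by (elim exE conjE)
  from mesh_\<W> obtain \<delta>0 where "\<delta>0 \<in> left_coarse G T" "mesh \<W> \<subseteq> \<delta>0"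
    unfolding subspace_coarse_def by blast
  moreover from this(1) obtain D where D: "compactin T D" "\<delta>0 \<subseteq> left_base G D"
    by (rule left_coarseE)
  ultimately have mesh_D: "mesh \<W> \<subseteq> left_base G D" by blast
  obtain \<delta> where "\<delta> \<in> left_coarse G T" and \<delta>: "left_base G (K <#> D <#> K) \<subseteq> \<delta>"
    using compactin_set_mult[OF compactin_set_mult[OF K(1) D(1)] K(1)]
    by (rule compact_left_base_bounded)
  show "\<exists>\<delta>\<in>left_coarse G T. \<forall>F. finite F \<and> F \<subseteq> carrier G \<longrightarrow>
      (\<exists>\<U>. F \<subseteq> \<Union>\<U> \<and> mesh \<U> \<subseteq> \<delta> \<and> (\<forall>p\<in>F. meets_at_most \<U> (ball_c p \<epsilon>) (n + 1)))"
  proof (intro bexI[of _ \<delta>] allI impI)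
    fix F assume F: "finite F \<and> F \<subseteq> carrier G"
    then obtain x where x: "x \<in> carrier G" "x <# F \<subseteq> A <#> K"
      using K(3) unfolding thick_in_def by blast
    have K_carrier: "K \<subseteq> carrier G" by (rule compactin_subset_carrier[OF K(1)])
    have "F \<subseteq> \<Union>(translate_cover G x K \<W>)"
      using F by (intro translate_cover_covers[OF x(1) _ x(2) \<W>(2)]) simp
    moreover have "mesh (translate_cover G x K \<W>) \<subseteq> \<delta>"
      using translate_cover_mesh[OF x(1) K_carrier K(2) compactin_subset_carrier[OF D(1)] mesh_D] \<delta>
      by (rule order_trans)
    moreover have "meets_at_most (translate_cover G x K \<W>) (ball_c p \<epsilon>) (n + 1)" if "p \<in> F" for p
    proof (rule translate_cover_meets_at_most[OF x(1) _ _ K_carrier K(2)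
          compactin_subset_carrier[OF K1(1)] K1(2) \<W>(1) A])
      show "p \<in> carrier G" using that F by auto
      show "x \<otimes> p \<in> A <#> K" using that x(2) by (auto simp: l_coset_def)
      show "left_base G (K <#> K1 <#> K) \<inter> A \<times> A \<subseteq> \<delta>1 \<inter> A \<times> A" using \<delta>1 by auto
      show "meets_at_most \<W> (ball_c a (\<delta>1 \<inter> A \<times> A)) (n + 1)" if "a \<in> A" for a
        using mult that by blast
    qed
    ultimately show "\<exists>\<U>. F \<subseteq> \<Union>\<U> \<and> mesh \<U> \<subseteq> \<delta> \<and> (\<forall>p\<in>F. meets_at_most \<U> (ball_c p \<epsilon>) (n + 1))"
      by (intro exI[of _ "translate_cover G x K \<W>"] conjI ballI)
  qed fact
qed

end

lemma asdim_less_asdimE: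
  assumes "asdim X E < asdim Y E'"
  obtains n where "asdim_le X E n" "\<not> asdim_le Y E' n"
proof -
  have ex: "\<exists>n. asdim_le X E n"
    using assms by (auto simp: asdim_def split: if_splits)
  let ?n = "LEAST n. asdim_le X E n"
  have "asdim_le X E ?n" using ex by (rule LeastI_ex)
  moreover have "\<not> asdim_le Y E' ?n"
  proof
    assume "asdim_le Y E' ?n"
    then have "asdim Y E' \<le> enat ?n" by (auto simp: asdim_def intro: Least_le)
    with assms ex show False by (simp add: asdim_def)
  qed
  ultimately show ?thesis by (rule that)
qed

theorem theorem1p6:
  fixes G :: "('a, 'b) monoid_scheme" and T :: "'a topology"
  assumes "topological_group G T"
  shows "lower_dim_sets (carrier G) (left_coarse G T) \<subseteq> small_sets (carrier G) (left_coarse G T)"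
proof
  interpret top_group G T
    using assms by (simp add: top_group_def top_group_axioms_def topological_group_def)
  fix A assume "A \<in> lower_dim_sets (carrier G) (left_coarse G T)"
  then have A: "A \<subseteq> carrier G"
    and less: "asdim A (subspace_coarse (left_coarse G T) A) < asdim (carrier G) (left_coarse G T)"
    by (auto simp: lower_dim_sets_def)
  from less obtain n where n: "asdim_le A (subspace_coarse (left_coarse G T) A) n"
      "\<not> asdim_le (carrier G) (left_coarse G T) n"
    by (rule asdim_less_asdimE)
  have "large (carrier G) (left_coarse G T) (L - A)" if "large (carrier G) (left_coarse G T) L" for L
  proof (rule ccontr)
    assume "\<not> large (carrier G) (left_coarse G T) (L - A)"
    with that obtain K where "compactin T K" "(\<lambda>x. inv\<^bsub>G\<^esub> x) ` K = K" "thick_in G A K"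
      by (rule thick_in_if_not_large_diff)
    then have "asdim_le (carrier G) (left_coarse G T) n"
      using A n(1) by (intro asdim_le_if_thick_in)
    with n(2) show False ..
  qed
  then show "A \<in> small_sets (carrier G) (left_coarse G T)"
    using A by (auto simp: small_sets_def)
qed

end
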